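(* In the setting of the data-aided combiner (with $\mathbf M=\mathbf H(\hat{\mathbf W}\circ\mathbf E)+\mathbf Z$, $\hat{\mathbf h}_k=\mathbf M\mathbf C_k$ and $\mathbf C_k=(\mathbf P+N_0\mathbf I)^{-1}\beta_k(\hat{\mathbf w}_k\circ\mathbb{E}[\mathbf e_k])^{\rm H}$ the optimal combiner), assume additionally that $\mathbf S\mathbf S^{\rm H}=\tau_{\rm T}P_{\rm T}\mathbf I_K$ and $\hat{\mathbf X}\hat{\mathbf X}^{\rm H}=\tau_{\rm D}P_{\rm D}\mathbf I_K$ for some $P_{\rm T}>0$. Then $$\mathbb{E}\|\hat{\mathbf h}_k-\mathbf h_k\|^2=\frac{M\beta_k}{1+\rho_k^{\rm DA}\beta_k},\qquad\text{hence}\qquad 10\log_{10}\frac{\mathbb{E}\|\hat{\mathbf h}_k-\mathbf h_k\|^2}{\mathbb{E}\|\mathbf h_k\|^2}=10\log_{10}\Big(\frac{1}{1+\rho_k^{\rm DA}\beta_k}\Big),$$ where $$\rho_k^{\rm DA}=\frac{\tau_{\rm T}P_{\rm T}}{N_0}+\frac{\tau_{\rm D}P_{\rm D}(1-2\mathrm{BER}_k)^2}{\Delta S_{\mathbf X}+N_0},\qquad \Delta S_{\mathbf X}=P_{\rm D}\sum_{i=1}^K\beta_i\{1-(1-2\mathrm{BER}_i)^2\}.$$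
   Context: Setting: integers $M,K,\tau_{\rm T},\tau_{\rm D}\ge1$; $N_0,P_{\rm D}>0$; $\beta_i>0$; $\mathrm{BER}_i\in[0,1]$. $\hat{\mathbf W}=[\mathbf S,\hat{\mathbf X}]$ with $\mathbf S\in\mathbb{C}^{K\times\tau_{\rm T}}$, $\hat{\mathbf X}\in\mathbb{C}^{K\times\tau_{\rm D}}$ deterministic, $|\hat x_{kj}|^2=P_{\rm D}$. $\mathbf E=[\mathbf E_1,\mathbf E_2]$, $\mathbf E_1$ all ones, $\mathbf E_2\in\{\pm1\}^{K\times\tau_{\rm D}}$ independent entries with $\Pr([\mathbf E_2]_{kj}=-1)=\mathrm{BER}_k$. $\mathbf H\in\mathbb{C}^{M\times K}$ independent columns $\mathbf h_k\sim\mathcal{CN}(\mathbf 0,\beta_k\mathbf I_M)$; $\mathbf Z$ i.i.d. $\mathcal{CN}(0,N_0)$ entries; $\mathbf H,\mathbf E,\mathbf Z$ independent. $\hat{\mathbf w}_k,\mathbf e_k$ are the $k$-th rows of $\hat{\mathbf W},\mathbf E$; $\mathbf P=\mathbb{E}[(\hat{\mathbf W}\circ\mathbf E)^{\rm H}\mathrm{diag}(\beta_1,\dots,\beta_K)(\hat{\mathbf W}\circ\mathbf E)]$; $\circ$ is the Hadamard product. (In the paper the assumption $\hat{\mathbf X}\hat{\mathbf X}^{\rm H}=\tau_{\rm D}P_{\rm D}\mathbf I_K$ is justified as an approximation for long data length $\tau_{\rm D}$.) *)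

theory Defs
  imports "HOL-Probability.Probability"
begin

text \<open>Matrices are rendered as \<open>complex ^ 'cols ^ 'rows\<close>, entry \<open>A $ row $ col\<close>.
  Index types: 'm antennas (M = CARD('m)), 'k users (K = CARD('k)),
  't training slots (tau_T = CARD('t)), 'd data slots (tau_D = CARD('d));
  the full block length is indexed by the sum type 't + 'd (Inl = training, Inr = data).\<close>

definition cgauss :: "real \<Rightarrow> complex measure" where
  "cgauss s = density lborel (\<lambda>z. ennreal (exp (- (cmod z)\<^sup>2 / s) / (pi * s)))"

definition ctrans :: "complex^'n^'m \<Rightarrow> complex^'m^'n" where
  "ctrans A = (\<chi> i j. cnj (A $ j $ i))"

definition hadamard :: "complex^'n^'m \<Rightarrow> complex^'n^'m \<Rightarrow> complex^'n^'m" where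
  "hadamard A B = (\<chi> i j. A $ i $ j * B $ i $ j)"

definition mexp :: "'w measure \<Rightarrow> ('w \<Rightarrow> complex^'n^'m) \<Rightarrow> complex^'n^'m" where
  "mexp \<Omega> F = (\<chi> i j. integral\<^sup>L \<Omega> (\<lambda>w. F w $ i $ j))"

definition vexp :: "'w measure \<Rightarrow> ('w \<Rightarrow> complex^'n) \<Rightarrow> complex^'n" where
  "vexp \<Omega> F = (\<chi> i. integral\<^sup>L \<Omega> (\<lambda>w. F w $ i))"

definition What :: "complex^'t::finite^'k \<Rightarrow> complex^'d^'k \<Rightarrow> complex^('t + 'd)^'k" where
  "What S X = (\<chi> k j. case j of Inl t \<Rightarrow> S $ k $ t | Inr d \<Rightarrow> X $ k $ d)"

text \<open>E = [E1, E2] with E1 all ones and E2 the (real, +-1) data error pattern.\<close>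
definition Efull :: "real^'d::finite^'k \<Rightarrow> complex^('t::finite + 'd)^'k" where
  "Efull E2 = (\<chi> k j. case j of Inl t \<Rightarrow> 1 | Inr d \<Rightarrow> complex_of_real (E2 $ k $ d))"

definition row :: "'k \<Rightarrow> 'a^'n^'k \<Rightarrow> 'a^'n" where
  "row k A = A $ k"

definition col :: "'k \<Rightarrow> 'a^'k^'m \<Rightarrow> 'a^'m" where
  "col k A = (\<chi> i. A $ i $ k)"

text \<open>Index set for all scalar random entries of H, E2, Z (joint independence).\<close>
datatype ('m, 'k, 't, 'd) ridx = HI 'm 'k | EI 'k 'd | ZI 'm "'t + 'd"

fun rfam :: "('w \<Rightarrow> complex^'k::finite^'m::finite) \<Rightarrow> ('w \<Rightarrow> real^'d::finite^'k) \<Rightarrow> ('w \<Rightarrow> complex^('t::finite+'d)^'m)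
              \<Rightarrow> ('m, 'k, 't, 'd) ridx \<Rightarrow> 'w \<Rightarrow> complex" where
  "rfam H E2 Z (HI i k) = (\<lambda>w. H w $ i $ k)"
| "rfam H E2 Z (EI k d) = (\<lambda>w. complex_of_real (E2 w $ k $ d))"
| "rfam H E2 Z (ZI i j) = (\<lambda>w. Z w $ i $ j)"

definition Pmat :: "'w measure \<Rightarrow> complex^'t::finite^'k::finite \<Rightarrow> complex^'d^'k \<Rightarrow> ('k \<Rightarrow> real)
                     \<Rightarrow> ('w \<Rightarrow> real^'d^'k) \<Rightarrow> complex^('t+'d)^('t+'d)" where
  "Pmat \<Omega> S X \<beta> E2 = mexp \<Omega> (\<lambda>w. ctrans (hadamard (What S X) (Efull (E2 w)))
        ** (\<chi> i j. if i = j then complex_of_real (\<beta> i) else 0)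
        ** hadamard (What S X) (Efull (E2 w)))"

definition Ccomb :: "'w measure \<Rightarrow> complex^'t::finite^'k::finite \<Rightarrow> complex^'d^'k \<Rightarrow> ('k \<Rightarrow> real) \<Rightarrow> real
                     \<Rightarrow> ('w \<Rightarrow> real^'d^'k) \<Rightarrow> 'k \<Rightarrow> complex^('t+'d)" where
  "Ccomb \<Omega> S X \<beta> N0 E2 k =
     matrix_inv (Pmat \<Omega> S X \<beta> E2 + mat (complex_of_real N0))
     *v (\<chi> j. complex_of_real (\<beta> k) *
           cnj (row k (What S X) $ j * vexp \<Omega> (\<lambda>w. row k (Efull (E2 w))) $ j))"

definition Mrx :: "complex^'k::finite^'m::finite \<Rightarrow> complex^'t::finite^'k \<Rightarrow> complex^'d^'k \<Rightarrow> real^'d^'k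
                   \<Rightarrow> complex^('t+'d)^'m \<Rightarrow> complex^('t+'d)^'m" where
  "Mrx H S X E2 Z = H ** hadamard (What S X) (Efull E2) + Z"

definition DeltaSX :: "real \<Rightarrow> ('k::finite \<Rightarrow> real) \<Rightarrow> ('k \<Rightarrow> real) \<Rightarrow> real" where
  "DeltaSX PD \<beta> BER = PD * (\<Sum>i\<in>UNIV. \<beta> i * (1 - (1 - 2 * BER i)\<^sup>2))"

definition rhoDA :: "nat \<Rightarrow> nat \<Rightarrow> real \<Rightarrow> real \<Rightarrow> real \<Rightarrow> ('k::finite \<Rightarrow> real) \<Rightarrow> ('k \<Rightarrow> real) \<Rightarrow> 'k \<Rightarrow> real" where
  "rhoDA tauT tauD PT PD N0 \<beta> BER k =
     real tauT * PT / N0 + real tauD * PD * (1 - 2 * BER k)\<^sup>2 / (DeltaSX PD \<beta> BER + N0)"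

end

theory Submission
  imports Defs
begin

(* The estimation error at antenna a is  \<Sum>i h_ai c_i(E) + \<Sum>j z_aj C_j,  where
   c_i(E) = \<Sum>j w_ij e_ij C_j - [i = k].  The entries of H and Z are centred and independent of
   each other and of E, so all cross terms vanish and every antenna contributes
   \<Sum>i \<beta>_i E|c_i|^2 + N0 |C|^2 = C^H G C - 2 Re (a^H C) + \<beta>_k,  with G = P + N0 I and
   a = \<beta>_k (w_k o E e_k)^H.  Because E e_ij = 1 - 2 BER_i and distinct entries of E are
   independent, G = Wbar^H diag \<beta> Wbar + diag \<Lambda>, where Wbar = W o E[E] and \<Lambda> is N0 on
   pilot columns and \<Delta>S_X + N0 on data columns.  The orthogonality of S and of X turns
   Wbar \<Lambda>^-1 Wbar^H into diag \<rho>, so C = \<beta>_k / (1 + \<rho>_k \<beta>_k) \<Lambda>^-1 Wbar^H e_k solves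
   G C = a, and the error per antenna is  \<beta>_k - a^H C = \<beta>_k / (1 + \<rho>_k \<beta>_k). *)

lemma borel_measurable_cnj [measurable]: "cnj \<in> borel_measurable borel"
  by (rule borel_measurable_continuous_onI) (intro continuous_intros)

lemma matrix_inv_left: "invertible A \<Longrightarrow> matrix_inv A ** A = mat 1"
  unfolding matrix_inv_def invertible_def by (rule someI2_ex) auto

lemma ctrans_diag_mult_entry:
  "(ctrans B ** (\<chi> i j. if i = j then c i else 0) ** B) $ l $ j = (\<Sum>i\<in>UNIV. cnj (B$i$l) * c i * B$i$j)"
proof -
  have "(ctrans B ** (\<chi> i j. if i = j then c i else 0)) $ l $ i = cnj (B$i$l) * c i" for i
    by (simp add: matrix_matrix_mult_def ctrans_def if_distrib[of "\<lambda>x. _ * x"] cong: if_cong)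
  then show ?thesis
    by (simp add: matrix_matrix_mult_def[of "ctrans B ** _" B])
qed

lemma sum_UNIV_Plus:
  "(\<Sum>j\<in>(UNIV::('a::finite + 'b::finite) set). f j) = (\<Sum>t\<in>UNIV. f (Inl t)) + (\<Sum>d\<in>UNIV. f (Inr d))"
  by (simp add: UNIV_Plus_UNIV[symmetric] sum.Plus del: UNIV_Plus_UNIV)

lemma has_bochner_integral_via_distr:
  fixes Y :: "'a \<Rightarrow> complex" and g :: "complex \<Rightarrow> complex"
  assumes Y: "Y \<in> borel_measurable M" and "distr M borel Y = Q"
    and g: "g \<in> borel_measurable borel" and "has_bochner_integral Q g x"
  shows "has_bochner_integral M (\<lambda>w. g (Y w)) x"
  using assms integrable_distr_eq[OF Y g] integral_distr[OF Y g]
  by (simp add: has_bochner_integral_iff)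

lemma (in prob_space) has_bochner_integral_indep_mult:
  fixes X :: "'i \<Rightarrow> 'a \<Rightarrow> complex" and G :: "('i \<Rightarrow> complex) \<Rightarrow> complex"
  assumes ind: "indep_vars (\<lambda>_. borel) X UNIV" and "r \<notin> J"
    and f: "f \<in> borel_measurable borel" and G: "G \<in> borel_measurable (PiM J (\<lambda>_. borel))"
    and hf: "has_bochner_integral M (\<lambda>w. f (X r w)) a"
    and hg: "has_bochner_integral M g b"
    and eq: "\<And>w. w \<in> space M \<Longrightarrow> G (restrict (\<lambda>i. X i w) J) = g w"
  shows "has_bochner_integral M (\<lambda>w. f (X r w) * g w) (a * b)"
proof -
  have "indep_var (PiM {r} (\<lambda>_. borel)) (\<lambda>w. restrict (\<lambda>i. X i w) {r})
                  (PiM J (\<lambda>_. borel)) (\<lambda>w. restrict (\<lambda>i. X i w) J)"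
    by (rule indep_var_restrict[OF ind]) (use \<open>r \<notin> J\<close> in auto)
  moreover have "(\<lambda>t. f (t r)) \<in> borel_measurable (PiM {r} (\<lambda>_. borel))"
    using f by measurable
  ultimately have "indep_var borel ((\<lambda>t. f (t r)) \<circ> (\<lambda>w. restrict (\<lambda>i. X i w) {r}))
                             borel (G \<circ> (\<lambda>w. restrict (\<lambda>i. X i w) J))"
    using G by (rule indep_var_compose)
  then have iv: "indep_var borel (\<lambda>w. f (X r w)) borel (\<lambda>w. G (restrict (\<lambda>i. X i w) J))"
    by (simp add: comp_def)
  have i1: "integrable M (\<lambda>w. f (X r w))" using hf by (simp add: has_bochner_integral_iff)
  have i2: "integrable M (\<lambda>w. G (restrict (\<lambda>i. X i w) J))"
    using hg by (simp add: has_bochner_integral_iff Bochner_Integration.integrable_cong[OF refl eq])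
  have "integral\<^sup>L M (\<lambda>w. G (restrict (\<lambda>i. X i w) J)) = b"
    using hg by (simp add: has_bochner_integral_iff Bochner_Integration.integral_cong[OF refl eq])
  then have "has_bochner_integral M (\<lambda>w. f (X r w) * G (restrict (\<lambda>i. X i w) J)) (a * b)"
    using indep_var_lebesgue_integral[OF iv i1 i2] indep_var_integrable[OF iv i1 i2] hf
    by (simp add: has_bochner_integral_iff)
  then show ?thesis
    by (rule has_bochner_integral_cong[THEN iffD1, rotated -1]) (auto simp: eq)
qed

lemma (in prob_space) has_bochner_integral_const: "has_bochner_integral M (\<lambda>w. c) (c :: complex)"
  using prob_space by (simp add: has_bochner_integral_iff)

section \<open>Circularly-symmetric complex Gaussian\<close>

definition cgauss_density :: "real \<Rightarrow> complex \<Rightarrow> real" where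
  "cgauss_density s z = exp (- (cmod z)\<^sup>2 / s) / (pi * s)"

lemma cgauss_eq_density: "cgauss s = density lborel (\<lambda>z. ennreal (cgauss_density s z))"
  unfolding cgauss_def cgauss_density_def by simp

lemma cgauss_density_nonneg: "s > 0 \<Longrightarrow> 0 \<le> cgauss_density s z"
  unfolding cgauss_density_def by simp

lemma borel_measurable_cgauss_density [measurable]: "cgauss_density s \<in> borel_measurable borel"
  unfolding cgauss_density_def by measurable

lemma cgauss_density_eq_normal_density:
  assumes s: "s > 0"
  shows "cgauss_density s z
           = normal_density 0 (sqrt (s/2)) (Re z) * normal_density 0 (sqrt (s/2)) (Im z)"
proof -
  have "sqrt (2 * pi * (sqrt (s/2))\<^sup>2) = sqrt (pi * s)" using s by simp
  moreover have "sqrt (pi * s) * sqrt (pi * s) = pi * s"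
    using s pi_gt_zero by (simp add: real_sqrt_mult_self)
  ultimately show ?thesis using s
    unfolding cgauss_density_def normal_density_def cmod_power2
    by (simp add: exp_add[symmetric] field_simps)
qed

lemma nn_integral_lborel_complex_Re_Im:
  assumes [measurable]: "f \<in> borel_measurable borel" "g \<in> borel_measurable borel"
    and "\<And>x. 0 \<le> f x" "\<And>x. 0 \<le> g x"
  shows "(\<integral>\<^sup>+z. ennreal (f (Re z) * g (Im z)) \<partial>lborel) =
         (\<integral>\<^sup>+x. ennreal (f x) \<partial>lborel) * (\<integral>\<^sup>+x. ennreal (g x) \<partial>lborel)"
proof -
  define F where "F b = (if b = (1::complex) then (\<lambda>x. ennreal (f x)) else (\<lambda>x. ennreal (g x)))" for b
  have "(\<integral>\<^sup>+z. (\<Prod>b\<in>Basis. F b (z \<bullet> b)) \<partial>lborel) = (\<Prod>b\<in>Basis. integral\<^sup>N lborel (F b))"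
    by (rule nn_integral_lborel_prod) (auto simp: F_def)
  moreover have "(\<Prod>b\<in>Basis. F b (z \<bullet> b)) = ennreal (f (Re z) * g (Im z))" for z
    using assms by (simp add: Basis_complex_def F_def ennreal_mult)
  moreover have "(\<Prod>b\<in>Basis. integral\<^sup>N lborel (F b))
                   = (\<integral>\<^sup>+x. ennreal (f x) \<partial>lborel) * (\<integral>\<^sup>+x. ennreal (g x) \<partial>lborel)"
    by (simp add: Basis_complex_def F_def)
  ultimately show ?thesis by simp
qed

lemma nn_integral_normal_density: "\<sigma> > 0 \<Longrightarrow> (\<integral>\<^sup>+x. ennreal (normal_density 0 \<sigma> x) \<partial>lborel) = 1"
  by (subst nn_integral_eq_integral) (auto simp: integral_normal_density)

lemma nn_integral_normal_density_square:
  assumes "\<sigma> > 0"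
  shows "(\<integral>\<^sup>+x. ennreal (normal_density 0 \<sigma> x * x\<^sup>2) \<partial>lborel) = ennreal (\<sigma>\<^sup>2)"
proof -
  have "has_bochner_integral lborel (\<lambda>x. normal_density 0 \<sigma> x * x\<^sup>2) (\<sigma>\<^sup>2)"
    using normal_moment_even[of \<sigma> 0 1] assms
    by (simp add: field_simps power2_eq_square[of x for x] mult.commute mult.left_commute)
  then show ?thesis
    by (subst nn_integral_eq_integral) (auto simp: has_bochner_integral_iff)
qed

lemma nn_integral_cgauss_density: "s > 0 \<Longrightarrow> (\<integral>\<^sup>+z. ennreal (cgauss_density s z) \<partial>lborel) = 1"
  by (simp add: cgauss_density_eq_normal_density nn_integral_lborel_complex_Re_Im
      nn_integral_normal_density)

lemma nn_integral_cgauss_density_norm_square: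
  assumes s: "s > 0"
  shows "(\<integral>\<^sup>+z. ennreal (cgauss_density s z * (cmod z)\<^sup>2) \<partial>lborel) = ennreal s"
proof -
  let ?n = "normal_density 0 (sqrt (s/2))"
  have "(\<integral>\<^sup>+z. ennreal (cgauss_density s z * (cmod z)\<^sup>2) \<partial>lborel)
     = (\<integral>\<^sup>+z. ennreal ((?n (Re z) * (Re z)\<^sup>2) * ?n (Im z))
              + ennreal (?n (Re z) * (?n (Im z) * (Im z)\<^sup>2)) \<partial>lborel)"
    using s by (intro nn_integral_cong)
      (simp add: cgauss_density_eq_normal_density cmod_power2 ennreal_plus[symmetric]
        algebra_simps del: ennreal_plus)
  also have "\<dots> = (\<integral>\<^sup>+z. ennreal ((?n (Re z) * (Re z)\<^sup>2) * ?n (Im z)) \<partial>lborel)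
                 + (\<integral>\<^sup>+z. ennreal (?n (Re z) * (?n (Im z) * (Im z)\<^sup>2)) \<partial>lborel)"
    by (rule nn_integral_add) auto
  also have "\<dots> = ennreal (s/2) + ennreal (s/2)"
    using s nn_integral_lborel_complex_Re_Im[of "\<lambda>x. ?n x * x\<^sup>2" ?n]
      nn_integral_lborel_complex_Re_Im[of ?n "\<lambda>x. ?n x * x\<^sup>2"]
      nn_integral_normal_density[of "sqrt (s/2)"] nn_integral_normal_density_square[of "sqrt (s/2)"]
    by (simp add: mult.assoc)
  also have "\<dots> = ennreal s" using s by (simp add: ennreal_plus[symmetric] del: ennreal_plus)
  finally show ?thesis .
qed

lemma prob_space_cgauss: "s > 0 \<Longrightarrow> prob_space (cgauss s)"
  by (rule prob_spaceI) (simp add: cgauss_eq_density emeasure_density nn_integral_cgauss_density)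

lemma has_bochner_integral_cgauss_norm_square:
  assumes s: "s > 0"
  shows "has_bochner_integral (cgauss s) (\<lambda>z. (cmod z)\<^sup>2) s"
proof (rule has_bochner_integral_nn_integral)
  show "(\<integral>\<^sup>+ x. ennreal ((cmod x)\<^sup>2) \<partial>cgauss s) = ennreal s"
    unfolding cgauss_eq_density using s
    by (subst nn_integral_density)
      (auto simp: ennreal_mult[symmetric] cgauss_density_nonneg nn_integral_cgauss_density_norm_square)
qed (use s in \<open>auto simp: cgauss_eq_density\<close>)

lemma has_bochner_integral_cgauss_mult_cnj:
  assumes s: "s > 0"
  shows "has_bochner_integral (cgauss s) (\<lambda>z. z * cnj z) (complex_of_real s)"
  using has_bochner_integral_of_real[OF has_bochner_integral_cgauss_norm_square[OF s]]
  by (simp add: complex_norm_square[symmetric])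

lemma integrable_cgauss_id:
  assumes s: "s > 0"
  shows "integrable (cgauss s) (\<lambda>z. z)"
proof -
  interpret prob_space "cgauss s" using prob_space_cgauss[OF s] .
  have "integrable (cgauss s) (\<lambda>z. 1 + (cmod z)\<^sup>2)"
    using has_bochner_integral_cgauss_norm_square[OF s]
    by (auto simp: has_bochner_integral_iff)
  then show ?thesis
  proof (rule Bochner_Integration.integrable_bound)
    have "cmod z \<le> 1 + (cmod z)\<^sup>2" for z
      using sum_power2_ge_zero[of "cmod z - 1/2" 0] by (simp add: power2_eq_square algebra_simps)
    then show "AE z in cgauss s. norm z \<le> norm (1 + (cmod z)\<^sup>2)"
      by simp
  qed (simp add: cgauss_eq_density)
qed

lemma has_bochner_integral_cgauss_mean:
  assumes s: "s > 0"
  shows "has_bochner_integral (cgauss s) (\<lambda>z. z) 0"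
proof -
  let ?F = "\<lambda>z::complex. cgauss_density s z *\<^sub>R z"
  have mean: "integral\<^sup>L (cgauss s) (\<lambda>z. z) = integral\<^sup>L lborel ?F"
    unfolding cgauss_eq_density using s by (subst integral_density) (auto simp: cgauss_density_nonneg)
  have "(lborel :: complex measure) = distr lborel borel uminus"
    using lborel_affine[of "-1::real" "0::complex"] by (simp add: density_1)
  then have "integral\<^sup>L lborel ?F = integral\<^sup>L (distr lborel borel uminus) ?F"
    by simp
  also have "\<dots> = integral\<^sup>L lborel (\<lambda>z. ?F (- z))"
    by (rule integral_distr) auto
  also have "\<dots> = - integral\<^sup>L lborel ?F"
    by (simp add: cgauss_density_def)
  finally have "integral\<^sup>L lborel ?F = 0" by simp
  then show ?thesis using integrable_cgauss_id[OF s] mean by (simp add: has_bochner_integral_iff)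
qed

section \<open>The data-aided channel model\<close>

text \<open>An assignment \<open>t\<close> of values to all scalar random entries determines the entry
  \<open>(i, j)\<close> of \<open>E = [E1, E2]\<close>.\<close>

definition err_entry :: "'k \<Rightarrow> 't + 'd \<Rightarrow> (('m, 'k, 't, 'd) ridx \<Rightarrow> complex) \<Rightarrow> complex" where
  "err_entry i j t = (case j of Inl _ \<Rightarrow> 1 | Inr d \<Rightarrow> t (EI i d))"

definition error_indices :: "('m, 'k, 't, 'd) ridx set" where
  "error_indices = {r. \<exists>i d. r = EI i d}"

lemma err_entry_restrict: "(\<And>d. EI i d \<in> J) \<Longrightarrow> err_entry i j (restrict t J) = err_entry i j t"
  by (cases j) (auto simp: err_entry_def)

lemma measurable_err_entry [measurable]:
  fixes J :: "('m, 'k, 't, 'd) ridx set"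
  assumes "\<And>d. EI i d \<in> J"
  shows "err_entry i j \<in> borel_measurable (PiM J (\<lambda>_. borel))"
proof (cases j)
  case (Inl t)
  then have "err_entry i j = (\<lambda>_ :: ('m, 'k, 't, 'd) ridx \<Rightarrow> complex. 1)"
    by (simp add: err_entry_def fun_eq_iff)
  then show ?thesis by simp
next
  case (Inr d)
  then have "err_entry i j = (\<lambda>t :: ('m, 'k, 't, 'd) ridx \<Rightarrow> complex. t (EI i d))"
    by (simp add: err_entry_def fun_eq_iff)
  then show ?thesis using assms by (simp add: measurable_component_singleton)
qed

locale data_aided_channel = prob_space \<Omega>
  for \<Omega> :: "'w measure" +
  fixes H :: "'w \<Rightarrow> complex^'k::finite^'m::finite"
    and E2 :: "'w \<Rightarrow> real^'d::finite^'k"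
    and Z :: "'w \<Rightarrow> complex^('t::finite + 'd)^'m"
    and S :: "complex^'t^'k" and X :: "complex^'d^'k"
    and \<beta> BER :: "'k \<Rightarrow> real" and N0 PD PT :: real and k :: 'k
  assumes N0: "N0 > 0" and PD: "PD > 0" and PT: "PT > 0"
    and beta: "\<And>i. \<beta> i > 0"
    and BER: "\<And>i. 0 \<le> BER i \<and> BER i \<le> 1"
    and Xmod: "\<And>i j. (cmod (X $ i $ j))\<^sup>2 = PD"
    and SS: "S ** ctrans S = mat (complex_of_real (real CARD('t) * PT))"
    and XX: "X ** ctrans X = mat (complex_of_real (real CARD('d) * PD))"
    and indep: "indep_vars (\<lambda>_. borel) (rfam H E2 Z) UNIV"
    and Hdist: "\<And>i j. distr \<Omega> borel (\<lambda>w. H w $ i $ j) = cgauss (\<beta> j)"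
    and Zdist: "\<And>i j. distr \<Omega> borel (\<lambda>w. Z w $ i $ j) = cgauss N0"
    and Eval: "\<And>w i j. w \<in> space \<Omega> \<Longrightarrow> E2 w $ i $ j = 1 \<or> E2 w $ i $ j = -1"
    and Eprob: "\<And>i j. measure \<Omega> {w \<in> space \<Omega>. E2 w $ i $ j = -1} = BER i"
begin

abbreviation realization :: "'w \<Rightarrow> ('m, 'k, 't, 'd) ridx \<Rightarrow> complex" where
  "realization w \<equiv> (\<lambda>r. rfam H E2 Z r w)"

abbreviation W :: "complex^('t + 'd)^'k" where
  "W \<equiv> What S X"

definition comb :: "complex^('t + 'd)" where
  "comb = Ccomb \<Omega> S X \<beta> N0 E2 k"

lemma W_Inl: "W $ i $ Inl t = S $ i $ t"
  by (simp add: What_def)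

lemma W_Inr: "W $ i $ Inr d = X $ i $ d"
  by (simp add: What_def)

lemma rfam_measurable [measurable]: "rfam H E2 Z r \<in> borel_measurable \<Omega>"
  using indep unfolding indep_vars_def by auto

lemma H_measurable [measurable]: "(\<lambda>w. H w $ a $ i) \<in> borel_measurable \<Omega>"
  using rfam_measurable[of "HI a i"] by simp

lemma Z_measurable [measurable]: "(\<lambda>w. Z w $ a $ j) \<in> borel_measurable \<Omega>"
  using rfam_measurable[of "ZI a j"] by simp

lemma E2_measurable [measurable]: "(\<lambda>w. E2 w $ i $ d) \<in> borel_measurable \<Omega>"
proof -
  have "(\<lambda>w. Re (rfam H E2 Z (EI i d) w)) \<in> borel_measurable \<Omega>" by measurable
  then show ?thesis by simp
qed

lemma err_entry_realization_measurable [measurable]: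
  "(\<lambda>w. err_entry i j (realization w)) \<in> borel_measurable \<Omega>"
  by (cases j) (auto simp: err_entry_def)

lemma Efull_eq_err_entry: "Efull (E2 w) $ i $ j = err_entry i j (realization w)"
  by (cases j) (auto simp: Efull_def err_entry_def)

lemma err_entry_sign:
  assumes "w \<in> space \<Omega>"
  shows "err_entry i j (realization w) \<in> {1, -1}"
proof (cases j)
  case (Inr d)
  then show ?thesis using Eval[OF assms, of i d] by (auto simp: err_entry_def)
qed (simp add: err_entry_def)

lemma err_entry_square: "w \<in> space \<Omega> \<Longrightarrow> err_entry i j (realization w) * err_entry i j (realization w) = 1"
  using err_entry_sign[of w i j] by auto

lemma cnj_err_entry: "w \<in> space \<Omega> \<Longrightarrow> cnj (err_entry i j (realization w)) = err_entry i j (realization w)"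
  using err_entry_sign[of w i j] by auto

lemma norm_err_entry: "w \<in> space \<Omega> \<Longrightarrow> norm (err_entry i j (realization w)) = 1"
  using err_entry_sign[of w i j] by auto

lemmas indep_mult = has_bochner_integral_indep_mult[OF indep]

lemma H_mean: "has_bochner_integral \<Omega> (\<lambda>w. H w $ a $ i) 0"
  using has_bochner_integral_via_distr[OF H_measurable Hdist _ has_bochner_integral_cgauss_mean[OF beta]]
  by simp

lemma H_cnj_mean: "has_bochner_integral \<Omega> (\<lambda>w. cnj (H w $ a $ i)) 0"
  using has_bochner_integral_cnj[OF H_mean] by simp

lemma H_second_moment:
  "has_bochner_integral \<Omega> (\<lambda>w. H w $ a $ i * cnj (H w $ a $ i)) (complex_of_real (\<beta> i))"
  using has_bochner_integral_via_distr[OF H_measurable Hdist _ has_bochner_integral_cgauss_mult_cnj[OF beta]]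
  by simp

lemma Z_mean: "has_bochner_integral \<Omega> (\<lambda>w. Z w $ a $ j) 0"
  using has_bochner_integral_via_distr[OF Z_measurable Zdist _ has_bochner_integral_cgauss_mean[OF N0]]
  by simp

lemma Z_cnj_mean: "has_bochner_integral \<Omega> (\<lambda>w. cnj (Z w $ a $ j)) 0"
  using has_bochner_integral_cnj[OF Z_mean] by simp

lemma Z_second_moment:
  "has_bochner_integral \<Omega> (\<lambda>w. Z w $ a $ j * cnj (Z w $ a $ j)) (complex_of_real N0)"
  using has_bochner_integral_via_distr[OF Z_measurable Zdist _ has_bochner_integral_cgauss_mult_cnj[OF N0]]
  by simp

definition err_mean :: "'k \<Rightarrow> 't + 'd \<Rightarrow> complex" where
  "err_mean i j = (case j of Inl _ \<Rightarrow> 1 | Inr _ \<Rightarrow> complex_of_real (1 - 2 * BER i))"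

definition err_moment :: "'k \<Rightarrow> 't + 'd \<Rightarrow> 't + 'd \<Rightarrow> complex" where
  "err_moment i j l = (if j = l then 1 else err_mean i j * err_mean i l)"

lemma cnj_err_mean [simp]: "cnj (err_mean i j) = err_mean i j"
  by (cases j) (auto simp: err_mean_def)

lemma err_entry_mean: "has_bochner_integral \<Omega> (\<lambda>w. err_entry i j (realization w)) (err_mean i j)"
proof (cases j)
  case (Inl t)
  then show ?thesis using has_bochner_integral_const by (simp add: err_entry_def err_mean_def)
next
  case (Inr d)
  define A where "A = {w \<in> space \<Omega>. E2 w $ i $ d = -1}"
  have A: "A \<in> sets \<Omega>" unfolding A_def by measurable
  have "has_bochner_integral \<Omega> (\<lambda>w. 1 - 2 * indicator A w) (1 - 2 * measure \<Omega> A)"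
    using A prob_space emeasure_eq_measure[of A]
    by (intro has_bochner_integral_diff has_bochner_integral_mult_right has_bochner_integral_real_indicator)
       (auto simp: has_bochner_integral_iff)
  then have "has_bochner_integral \<Omega> (\<lambda>w. E2 w $ i $ d) (1 - 2 * BER i)"
  proof (rule has_bochner_integral_cong[THEN iffD1, rotated -1])
    fix w assume "w \<in> space \<Omega>"
    then show "1 - 2 * indicator A w = E2 w $ i $ d"
      using Eval[of w i d] by (auto simp: A_def indicator_def)
  qed (auto simp: A_def Eprob)
  then show ?thesis
    using has_bochner_integral_of_real by (fastforce simp: err_entry_def err_mean_def Inr)
qed

lemma err_entry_product_mean:
  "has_bochner_integral \<Omega> (\<lambda>w. err_entry i j (realization w) * err_entry i l (realization w))
     (err_moment i j l)"
proof (cases "j = l")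
  case True
  show ?thesis
    by (rule has_bochner_integral_cong[THEN iffD1, rotated -1, OF has_bochner_integral_const])
       (auto simp: err_entry_square err_moment_def True)
next
  case False
  show ?thesis
  proof (cases "\<exists>t. j = Inl t \<or> l = Inl t")
    case True
    then show ?thesis
      using False err_entry_mean[of i l] err_entry_mean[of i j]
      by (auto simp: err_entry_def err_moment_def err_mean_def)
  next
    case no_pilot: False
    then obtain d d' where j: "j = Inr d" and l: "l = Inr d'"
      by (metis sumE)
    have "has_bochner_integral \<Omega>
            (\<lambda>w. (\<lambda>z. z) (rfam H E2 Z (EI i d) w) * err_entry i l (realization w))
            (err_mean i j * err_mean i l)"
    proof (rule indep_mult[where J="{EI i d'}" and G="\<lambda>t. t (EI i d')"])
      show "has_bochner_integral \<Omega> (\<lambda>w. rfam H E2 Z (EI i d) w) (err_mean i j)"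
        using err_entry_mean[of i j] by (simp add: err_entry_def j)
    qed (use False j l err_entry_mean[of i l] in \<open>auto simp: err_entry_def\<close>)
    then show ?thesis using False j by (simp add: err_moment_def err_entry_def)
  qed
qed

subsection \<open>The estimation error\<close>

text \<open>\<open>err_coeff i\<close> is the coefficient \<open>c_i\<close> of \<open>h_ai\<close> in the estimation error at every
  antenna \<open>a\<close>; it depends on the realization only through \<open>E\<close>.\<close>

definition err_coeff :: "'k \<Rightarrow> (('m, 'k, 't, 'd) ridx \<Rightarrow> complex) \<Rightarrow> complex" where
  "err_coeff i t = (\<Sum>j\<in>UNIV. W$i$j * comb$j * err_entry i j t) - of_bool (i = k)"

lemma ridx_error_indices_iff [simp]:
  "EI i d \<in> error_indices" "HI a i \<notin> error_indices" "ZI a j \<notin> error_indices"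
  by (simp_all add: error_indices_def)

lemma err_coeff_restrict [simp]:
  assumes "error_indices \<subseteq> J"
  shows "err_coeff i (restrict t J) = err_coeff i t"
proof -
  have "EI i d \<in> J" for d using assms by auto
  then show ?thesis by (simp add: err_coeff_def err_entry_restrict)
qed

lemma measurable_err_coeff [measurable]:
  "(\<And>d. EI i d \<in> J) \<Longrightarrow> err_coeff i \<in> borel_measurable (PiM J (\<lambda>_. borel))"
  unfolding err_coeff_def by measurable

lemma err_coeff_realization_measurable [measurable]:
  "(\<lambda>w. err_coeff i (realization w)) \<in> borel_measurable \<Omega>"
  unfolding err_coeff_def by measurable

lemma error_entry_eq:
  "(Mrx (H w) S X (E2 w) (Z w) *v comb - col k (H w)) $ a
     = (\<Sum>i\<in>UNIV. H w$a$i * err_coeff i (realization w)) + (\<Sum>j\<in>UNIV. Z w$a$j * comb$j)"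
proof -
  have "(Mrx (H w) S X (E2 w) (Z w) *v comb) $ a
        = (\<Sum>j\<in>UNIV. (\<Sum>i\<in>UNIV. H w$a$i * (W$i$j * err_entry i j (realization w))) * comb$j)
          + (\<Sum>j\<in>UNIV. Z w$a$j * comb$j)"
    by (simp add: Mrx_def matrix_vector_mult_def matrix_matrix_mult_def hadamard_def
        Efull_eq_err_entry sum.distrib algebra_simps)
  also have "(\<Sum>j\<in>UNIV. (\<Sum>i\<in>UNIV. H w$a$i * (W$i$j * err_entry i j (realization w))) * comb$j)
      = (\<Sum>i\<in>UNIV. H w$a$i * (\<Sum>j\<in>UNIV. W$i$j * comb$j * err_entry i j (realization w)))"
    by (simp add: sum_distrib_left sum_distrib_right algebra_simps) (rule sum.swap)
  finally show ?thesis
    by (simp add: err_coeff_def col_def right_diff_distrib sum_subtractf)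
qed

definition err_coeff_bound :: "'k \<Rightarrow> real" where
  "err_coeff_bound i = (\<Sum>j\<in>UNIV. cmod (W$i$j) * cmod (comb$j)) + 1"

lemma err_coeff_bound_nonneg: "0 \<le> err_coeff_bound i"
  unfolding err_coeff_bound_def by (intro add_nonneg_nonneg sum_nonneg) auto

lemma norm_err_coeff_le:
  assumes w: "w \<in> space \<Omega>"
  shows "norm (err_coeff i (realization w)) \<le> err_coeff_bound i"
proof -
  have "norm (err_coeff i (realization w))
          \<le> norm (\<Sum>j\<in>UNIV. W$i$j * comb$j * err_entry i j (realization w)) + norm (of_bool (i = k) :: complex)"
    unfolding err_coeff_def by (rule norm_triangle_ineq4)
  also have "\<dots> \<le> (\<Sum>j\<in>UNIV. norm (W$i$j * comb$j * err_entry i j (realization w))) + 1"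
    by (intro add_mono norm_sum) auto
  also have "\<dots> = err_coeff_bound i"
    using w by (simp add: err_coeff_bound_def norm_mult norm_err_entry)
  finally show ?thesis .
qed

lemma integrable_err_coeff_mult_cnj:
  "integrable \<Omega> (\<lambda>w. err_coeff i (realization w) * cnj (err_coeff i' (realization w)))"
proof (rule integrable_const_bound[where B="err_coeff_bound i * err_coeff_bound i'"])
  show "AE w in \<Omega>. norm (err_coeff i (realization w) * cnj (err_coeff i' (realization w)))
                     \<le> err_coeff_bound i * err_coeff_bound i'"
    by (rule AE_I2) (auto simp: norm_mult err_coeff_bound_nonneg intro!: mult_mono norm_err_coeff_le)
qed measurable

lemma integrable_const_mult_err_coeff: "integrable \<Omega> (\<lambda>w. c * err_coeff i (realization w))"
proof (rule integrable_const_bound[where B="norm c * err_coeff_bound i"])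
  show "AE w in \<Omega>. norm (c * err_coeff i (realization w)) \<le> norm c * err_coeff_bound i"
    by (rule AE_I2) (auto simp: norm_mult intro!: mult_left_mono norm_err_coeff_le)
qed measurable

definition err_coeff_power :: "'k \<Rightarrow> complex" where
  "err_coeff_power i =
     (\<Sum>j\<in>UNIV. \<Sum>l\<in>UNIV. W$i$j * comb$j * cnj (W$i$l * comb$l) * err_moment i j l)
     - of_bool (i = k) * (\<Sum>l\<in>UNIV. cnj (W$i$l * comb$l) * err_mean i l)
     - of_bool (i = k) * (\<Sum>j\<in>UNIV. W$i$j * comb$j * err_mean i j) + of_bool (i = k)"

lemma err_coeff_second_moment:
  "has_bochner_integral \<Omega> (\<lambda>w. err_coeff i (realization w) * cnj (err_coeff i (realization w)))
     (err_coeff_power i)"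
proof -
  let ?e = "\<lambda>j w. err_entry i j (realization w)"
  have "has_bochner_integral \<Omega>
      (\<lambda>w. (\<Sum>j\<in>UNIV. \<Sum>l\<in>UNIV. W$i$j * comb$j * cnj (W$i$l * comb$l) * (?e j w * ?e l w))
           - of_bool (i = k) * (\<Sum>l\<in>UNIV. cnj (W$i$l * comb$l) * ?e l w)
           - of_bool (i = k) * (\<Sum>j\<in>UNIV. W$i$j * comb$j * ?e j w) + of_bool (i = k))
      (err_coeff_power i)"
    unfolding err_coeff_power_def
    by (intro has_bochner_integral_add has_bochner_integral_diff has_bochner_integral_sum
        has_bochner_integral_mult_right err_entry_product_mean err_entry_mean has_bochner_integral_const)
  then show ?thesis
  proof (rule has_bochner_integral_cong[THEN iffD1, rotated -1])
    fix w assume w: "w \<in> space \<Omega>"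
    let ?A = "\<Sum>j\<in>UNIV. W$i$j * comb$j * ?e j w"
    let ?B = "\<Sum>l\<in>UNIV. cnj (W$i$l * comb$l) * ?e l w"
    have coeff: "err_coeff i (realization w) = ?A - of_bool (i = k)"
      by (simp add: err_coeff_def)
    have cnj_coeff: "cnj (?A - of_bool (i = k)) = ?B - of_bool (i = k)"
      using w by (simp add: cnj_err_entry cnj_sum)
    have "?A * ?B = (\<Sum>j\<in>UNIV. \<Sum>l\<in>UNIV. W$i$j * comb$j * cnj (W$i$l * comb$l) * (?e j w * ?e l w))"
      by (simp only: sum_product) (simp add: mult_ac)
    then show "(\<Sum>j\<in>UNIV. \<Sum>l\<in>UNIV. W$i$j * comb$j * cnj (W$i$l * comb$l) * (?e j w * ?e l w))
        - of_bool (i = k) * ?B - of_bool (i = k) * ?A + of_bool (i = k)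
      = err_coeff i (realization w) * cnj (err_coeff i (realization w))"
      unfolding coeff cnj_coeff by (simp add: algebra_simps)
  qed auto
qed

lemma H_term_second_moment:
  "has_bochner_integral \<Omega>
     (\<lambda>w. (H w$a$i * err_coeff i (realization w)) * cnj (H w$a$i * err_coeff i (realization w)))
     (complex_of_real (\<beta> i) * err_coeff_power i)"
proof -
  have "has_bochner_integral \<Omega>
      (\<lambda>w. (\<lambda>z. z * cnj z) (rfam H E2 Z (HI a i) w)
           * (err_coeff i (realization w) * cnj (err_coeff i (realization w))))
      (complex_of_real (\<beta> i) * err_coeff_power i)"
    by (rule indep_mult[where J=error_indices and G="\<lambda>t. err_coeff i t * cnj (err_coeff i t)"])
       (use H_second_moment err_coeff_second_moment in auto)
  then show ?thesis by (simp add: algebra_simps)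
qed

lemma H_terms_uncorrelated:
  assumes "i \<noteq> i'"
  shows "has_bochner_integral \<Omega>
     (\<lambda>w. (H w$a$i * err_coeff i (realization w)) * cnj (H w$a$i' * err_coeff i' (realization w))) 0"
proof -
  let ?c = "\<lambda>t. err_coeff i t * cnj (err_coeff i' t)"
  have inner: "has_bochner_integral \<Omega> (\<lambda>w. cnj (rfam H E2 Z (HI a i') w) * ?c (realization w))
      (0 * integral\<^sup>L \<Omega> (\<lambda>w. ?c (realization w)))"
    by (rule indep_mult[where J=error_indices and G="?c" and f=cnj])
       (use H_cnj_mean integrable_err_coeff_mult_cnj[THEN has_bochner_integral_integrable]
         in auto)
  have "has_bochner_integral \<Omega>
      (\<lambda>w. (\<lambda>z. z) (rfam H E2 Z (HI a i) w) * (cnj (rfam H E2 Z (HI a i') w) * ?c (realization w)))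
      (0 * 0)"
    by (rule indep_mult[where J="insert (HI a i') error_indices"
                          and G="\<lambda>t. cnj (t (HI a i')) * ?c t"])
       (use H_mean inner assms in \<open>auto simp: subset_insertI\<close>)
  then show ?thesis by (simp add: algebra_simps)
qed

lemma H_Z_terms_uncorrelated:
  "has_bochner_integral \<Omega>
     (\<lambda>w. (H w$a$i * err_coeff i (realization w)) * cnj (Z w$a$j * comb$j)) 0"
proof -
  let ?c = "\<lambda>t. cnj (comb$j) * err_coeff i t"
  have inner: "has_bochner_integral \<Omega> (\<lambda>w. cnj (rfam H E2 Z (ZI a j) w) * ?c (realization w))
      (0 * integral\<^sup>L \<Omega> (\<lambda>w. ?c (realization w)))"
    by (rule indep_mult[where J=error_indices and G="?c" and f=cnj])
       (use Z_cnj_mean integrable_const_mult_err_coeff[THEN has_bochner_integral_integrable]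
         in auto)
  have "has_bochner_integral \<Omega>
      (\<lambda>w. (\<lambda>z. z) (rfam H E2 Z (HI a i) w) * (cnj (rfam H E2 Z (ZI a j) w) * ?c (realization w)))
      (0 * 0)"
    by (rule indep_mult[where J="insert (ZI a j) error_indices" and G="\<lambda>t. cnj (t (ZI a j)) * ?c t"])
       (use H_mean inner in \<open>auto simp: subset_insertI\<close>)
  then show ?thesis by (simp add: algebra_simps)
qed

lemma Z_H_terms_uncorrelated:
  "has_bochner_integral \<Omega>
     (\<lambda>w. (Z w$a$j * comb$j) * cnj (H w$a$i * err_coeff i (realization w))) 0"
  using has_bochner_integral_cnj[OF H_Z_terms_uncorrelated[of a i j]] by (simp add: mult.commute)

lemma Z_term_second_moment:
  "has_bochner_integral \<Omega> (\<lambda>w. (Z w$a$j * comb$j) * cnj (Z w$a$j * comb$j))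
     (complex_of_real N0 * (comb$j * cnj (comb$j)))"
  using has_bochner_integral_mult_left[OF Z_second_moment[of a j], of "comb$j * cnj (comb$j)"]
  by (simp add: algebra_simps)

lemma Z_terms_uncorrelated:
  assumes "j \<noteq> j'"
  shows "has_bochner_integral \<Omega> (\<lambda>w. (Z w$a$j * comb$j) * cnj (Z w$a$j' * comb$j')) 0"
proof -
  have "has_bochner_integral \<Omega>
      (\<lambda>w. (\<lambda>z. z) (rfam H E2 Z (ZI a j) w) * (cnj (rfam H E2 Z (ZI a j') w) * (comb$j * cnj (comb$j'))))
      (0 * 0)"
    by (rule indep_mult[where J="{ZI a j'}" and G="\<lambda>t. cnj (t (ZI a j')) * (comb$j * cnj (comb$j'))"])
       (use Z_mean Z_cnj_mean[THEN has_bochner_integral_mult_left] assms in auto)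
  then show ?thesis by (simp add: algebra_simps)
qed

definition antenna_mse :: complex where
  "antenna_mse = (\<Sum>i\<in>UNIV. complex_of_real (\<beta> i) * err_coeff_power i)
                 + (\<Sum>j\<in>UNIV. complex_of_real N0 * (comb$j * cnj (comb$j)))"

abbreviation error :: "'w \<Rightarrow> complex^'m" where
  "error w \<equiv> Mrx (H w) S X (E2 w) (Z w) *v comb - col k (H w)"

lemma error_entry_second_moment:
  "has_bochner_integral \<Omega> (\<lambda>w. error w $ a * cnj (error w $ a)) antenna_mse"
proof -
  let ?A = "\<lambda>i w. H w$a$i * err_coeff i (realization w)"
  let ?B = "\<lambda>j w. Z w$a$j * comb$j"
  have AA: "has_bochner_integral \<Omega> (\<lambda>w. \<Sum>i\<in>UNIV. \<Sum>i'\<in>UNIV. ?A i w * cnj (?A i' w))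
      (\<Sum>i\<in>UNIV. \<Sum>i'\<in>UNIV. if i = i' then complex_of_real (\<beta> i) * err_coeff_power i else 0)"
    by (intro has_bochner_integral_sum)
       (use H_term_second_moment H_terms_uncorrelated in \<open>auto split: if_split\<close>)
  have AB: "has_bochner_integral \<Omega> (\<lambda>w. \<Sum>i\<in>UNIV. \<Sum>j\<in>UNIV. ?A i w * cnj (?B j w))
      (\<Sum>i\<in>(UNIV::'k set). \<Sum>j\<in>(UNIV::('t + 'd) set). 0)"
    by (intro has_bochner_integral_sum H_Z_terms_uncorrelated)
  have BA: "has_bochner_integral \<Omega> (\<lambda>w. \<Sum>j\<in>UNIV. \<Sum>i\<in>UNIV. ?B j w * cnj (?A i w))
      (\<Sum>j\<in>(UNIV::('t + 'd) set). \<Sum>i\<in>(UNIV::'k set). 0)"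
    by (intro has_bochner_integral_sum Z_H_terms_uncorrelated)
  have BB: "has_bochner_integral \<Omega> (\<lambda>w. \<Sum>j\<in>UNIV. \<Sum>j'\<in>UNIV. ?B j w * cnj (?B j' w))
      (\<Sum>j\<in>UNIV. \<Sum>j'\<in>UNIV. if j = j' then complex_of_real N0 * (comb$j * cnj (comb$j)) else 0)"
    by (intro has_bochner_integral_sum)
       (use Z_term_second_moment Z_terms_uncorrelated in \<open>auto split: if_split\<close>)
  have "error w $ a * cnj (error w $ a)
          = (\<Sum>i\<in>UNIV. \<Sum>i'\<in>UNIV. ?A i w * cnj (?A i' w)) + (\<Sum>i\<in>UNIV. \<Sum>j\<in>UNIV. ?A i w * cnj (?B j w))
            + (\<Sum>j\<in>UNIV. \<Sum>i\<in>UNIV. ?B j w * cnj (?A i w)) + (\<Sum>j\<in>UNIV. \<Sum>j'\<in>UNIV. ?B j w * cnj (?B j' w))"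
    for w
    unfolding error_entry_eq complex_cnj_add
    by (simp only: distrib_left distrib_right add_ac cnj_sum sum_product)
  then show ?thesis
    using has_bochner_integral_add[OF has_bochner_integral_add[OF has_bochner_integral_add[OF AA AB] BA] BB]
    by (simp add: antenna_mse_def)
qed

lemma has_bochner_integral_mse:
  "has_bochner_integral \<Omega> (\<lambda>w. (norm (error w))\<^sup>2) (real CARD('m) * Re antenna_mse)"
proof -
  have "has_bochner_integral \<Omega> (\<lambda>w. \<Sum>a\<in>UNIV. Re (error w $ a * cnj (error w $ a)))
          (\<Sum>a\<in>(UNIV::'m set). Re antenna_mse)"
    by (intro has_bochner_integral_sum has_bochner_integral_Re error_entry_second_moment)
  moreover have "(norm (error w))\<^sup>2 = (\<Sum>a\<in>UNIV. Re (error w $ a * cnj (error w $ a)))" for w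
    unfolding complex_norm_square[symmetric] Re_complex_of_real
    by (simp add: norm_vec_def L2_set_def sum_nonneg)
  ultimately show ?thesis by simp
qed

lemma has_bochner_integral_channel_energy:
  "has_bochner_integral \<Omega> (\<lambda>w. (norm (col k (H w)))\<^sup>2) (real CARD('m) * \<beta> k)"
proof -
  have "has_bochner_integral \<Omega> (\<lambda>w. \<Sum>a\<in>UNIV. Re (H w$a$k * cnj (H w$a$k)))
          (\<Sum>a\<in>(UNIV::'m set). Re (complex_of_real (\<beta> k)))"
    by (intro has_bochner_integral_sum has_bochner_integral_Re H_second_moment)
  moreover have "(norm (col k (H w)))\<^sup>2 = (\<Sum>a\<in>UNIV. Re (H w$a$k * cnj (H w$a$k)))" for w
    by (simp add: norm_vec_def L2_set_def sum_nonneg col_def complex_norm_square[symmetric]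
        del: of_real_power)
  ultimately show ?thesis by simp
qed

subsection \<open>The optimal combiner in closed form\<close>

definition Wbar :: "'k \<Rightarrow> 't + 'd \<Rightarrow> complex" where
  "Wbar i j = W$i$j * err_mean i j"

definition col_noise :: "'t + 'd \<Rightarrow> real" where
  "col_noise j = (case j of Inl _ \<Rightarrow> N0 | Inr _ \<Rightarrow> DeltaSX PD \<beta> BER + N0)"

definition rho :: real where
  "rho = rhoDA CARD('t) CARD('d) PT PD N0 \<beta> BER k"

definition gain :: real where
  "gain = \<beta> k / (1 + rho * \<beta> k)"

text \<open>\<open>Gmat\<close> is \<open>P + N0 I\<close> written out entrywise (\<open>Pmat_plus_noise_eq_Gmat\<close>).\<close>

definition Gmat :: "complex^('t + 'd)^('t + 'd)" where
  "Gmat = (\<chi> l j. (\<Sum>i\<in>UNIV. complex_of_real (\<beta> i) * cnj (W$i$l) * W$i$j * err_moment i l j)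
                  + (if l = j then complex_of_real N0 else 0))"

definition target :: "complex^('t + 'd)" where
  "target = (\<chi> j. complex_of_real (\<beta> k) * cnj (Wbar k j))"

definition comb_closed_form :: "complex^('t + 'd)" where
  "comb_closed_form = (\<chi> j. complex_of_real (gain / col_noise j) * cnj (Wbar k j))"

lemma DeltaSX_nonneg: "0 \<le> DeltaSX PD \<beta> BER"
proof -
  have "0 \<le> \<beta> i * (1 - (1 - 2 * BER i)\<^sup>2)" for i
  proof -
    have "0 \<le> BER i * (1 - BER i)" using BER[of i] by simp
    then have "(1 - 2 * BER i)\<^sup>2 \<le> 1" by (simp add: power2_eq_square algebra_simps)
    then show ?thesis using beta[of i] by simp
  qed
  then show ?thesis unfolding DeltaSX_def using PD by (simp add: sum_nonneg)
qed

lemma col_noise_pos: "col_noise j > 0"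
  using N0 DeltaSX_nonneg by (cases j) (auto simp: col_noise_def)

lemma rho_nonneg: "0 \<le> rho"
  unfolding rho_def rhoDA_def using N0 PT PD DeltaSX_nonneg
  by (intro add_nonneg_nonneg divide_nonneg_pos mult_nonneg_nonneg) auto

lemma one_plus_rho_beta_pos: "0 < 1 + rho * \<beta> k"
  using rho_nonneg beta[of k] by (simp add: add_pos_nonneg)

text \<open>This is where the orthogonality of the pilots \<open>S\<close> and of the data \<open>X\<close> enters.\<close>

lemma Wbar_weighted_orthogonal:
  "(\<Sum>j\<in>UNIV. Wbar i j * cnj (Wbar k j) / complex_of_real (col_noise j))
     = (if i = k then complex_of_real rho else 0)"
proof -
  have SS': "(\<Sum>t\<in>UNIV. S$i$t * cnj (S$k$t)) = (if i = k then complex_of_real (real CARD('t) * PT) else 0)"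
    using arg_cong[OF SS, of "\<lambda>A. A $ i $ k"] by (simp add: matrix_matrix_mult_def ctrans_def mat_def)
  have XX': "(\<Sum>d\<in>UNIV. X$i$d * cnj (X$k$d)) = (if i = k then complex_of_real (real CARD('d) * PD) else 0)"
    using arg_cong[OF XX, of "\<lambda>A. A $ i $ k"] by (simp add: matrix_matrix_mult_def ctrans_def mat_def)
  have "(\<Sum>j\<in>UNIV. Wbar i j * cnj (Wbar k j) / complex_of_real (col_noise j))
     = (\<Sum>t\<in>UNIV. S$i$t * cnj (S$k$t)) / complex_of_real N0
       + complex_of_real ((1 - 2 * BER i) * (1 - 2 * BER k)) * (\<Sum>d\<in>UNIV. X$i$d * cnj (X$k$d))
         / complex_of_real (DeltaSX PD \<beta> BER + N0)"
    by (simp add: sum_UNIV_Plus Wbar_def W_Inl W_Inr err_mean_def col_noise_def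
        sum_divide_distrib sum_distrib_left mult_ac)
  also have "\<dots> = (if i = k then complex_of_real rho else 0)"
    unfolding SS' XX' rho_def rhoDA_def by (simp add: power2_eq_square mult_ac)
  finally show ?thesis .
qed

text \<open>The error variances of the data symbols, summed over the users, add up to \<open>\<Delta>S_X\<close>.\<close>

lemma err_variance_sum_eq_col_noise:
  "(\<Sum>i\<in>UNIV. complex_of_real (\<beta> i) * (cnj (W$i$l) * W$i$l) * (1 - err_mean i l * err_mean i l))
     + complex_of_real N0 = complex_of_real (col_noise l)"
proof (cases l)
  case (Inl t)
  then show ?thesis by (simp add: err_mean_def col_noise_def)
next
  case (Inr d)
  have "cnj (X$i$d) * X$i$d = complex_of_real PD" for i
    using Xmod[of i d] by (simp add: complex_norm_square[symmetric] mult.commute)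
  then show ?thesis
    by (simp add: Inr err_mean_def col_noise_def W_Inr DeltaSX_def sum_distrib_left
        power2_eq_square mult_ac)
qed

lemma Gmat_entry:
  "Gmat $ l $ j = (\<Sum>i\<in>UNIV. complex_of_real (\<beta> i) * cnj (Wbar i l) * Wbar i j)
                  + (if l = j then complex_of_real (col_noise l) else 0)"
proof (cases "l = j")
  case True
  have "Gmat $ l $ j = (\<Sum>i\<in>UNIV. complex_of_real (\<beta> i) * cnj (Wbar i l) * Wbar i j)
     + ((\<Sum>i\<in>UNIV. complex_of_real (\<beta> i) * (cnj (W$i$l) * W$i$l) * (1 - err_mean i l * err_mean i l))
        + complex_of_real N0)"
    using True by (simp add: Gmat_def Wbar_def err_moment_def algebra_simps sum.distrib[symmetric]
        sum_subtractf[symmetric])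
  then show ?thesis using True err_variance_sum_eq_col_noise by simp
next
  case False
  then show ?thesis by (simp add: Gmat_def Wbar_def err_moment_def mult_ac)
qed

lemma Gmat_mult_vec:
  "(Gmat *v x) $ l = (\<Sum>i\<in>UNIV. complex_of_real (\<beta> i) * cnj (Wbar i l) * (\<Sum>j\<in>UNIV. Wbar i j * x$j))
                     + complex_of_real (col_noise l) * x$l"
proof -
  have "(\<Sum>j\<in>UNIV. (\<Sum>i\<in>UNIV. complex_of_real (\<beta> i) * cnj (Wbar i l) * Wbar i j) * x$j)
      = (\<Sum>i\<in>UNIV. complex_of_real (\<beta> i) * cnj (Wbar i l) * (\<Sum>j\<in>UNIV. Wbar i j * x$j))"
    by (simp add: sum_distrib_left sum_distrib_right mult_ac) (rule sum.swap)
  then show ?thesis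
    by (simp add: matrix_vector_mult_def Gmat_entry distrib_right sum.distrib
        if_distrib[of "\<lambda>c. c * _"] cong: if_cong)
qed

lemma Gmat_comb_closed_form: "Gmat *v comb_closed_form = target"
  unfolding vec_eq_iff
proof (intro allI)
  fix l
  have "(\<Sum>j\<in>UNIV. Wbar i j * comb_closed_form$j) = complex_of_real gain * (if i = k then complex_of_real rho else 0)"
    for i
  proof -
    have "(\<Sum>j\<in>UNIV. Wbar i j * comb_closed_form$j)
          = complex_of_real gain * (\<Sum>j\<in>UNIV. Wbar i j * cnj (Wbar k j) / complex_of_real (col_noise j))"
      by (simp add: comb_closed_form_def sum_distrib_left divide_inverse mult_ac)
    then show ?thesis by (simp add: Wbar_weighted_orthogonal)
  qed
  then have "(Gmat *v comb_closed_form) $ l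
      = complex_of_real (\<beta> k) * cnj (Wbar k l) * complex_of_real gain * complex_of_real rho
        + complex_of_real (col_noise l) * comb_closed_form$l"
    by (simp add: Gmat_mult_vec if_distrib[of "\<lambda>c. _ * c"] cong: if_cong)
  also have "\<dots> = cnj (Wbar k l) * complex_of_real (gain * (1 + rho * \<beta> k))"
    using col_noise_pos[of l] by (simp add: comb_closed_form_def field_simps)
  also have "\<dots> = target $ l"
    using one_plus_rho_beta_pos by (simp add: gain_def target_def)
  finally show "(Gmat *v comb_closed_form) $ l = target $ l" .
qed

lemma target_inner_comb_closed_form:
  "(\<Sum>j\<in>UNIV. cnj (target$j) * comb_closed_form$j) = complex_of_real (\<beta> k * gain * rho)"
proof -
  have "(\<Sum>j\<in>UNIV. cnj (target$j) * comb_closed_form$j)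
        = complex_of_real (\<beta> k) * complex_of_real gain
          * (\<Sum>j\<in>UNIV. Wbar k j * cnj (Wbar k j) / complex_of_real (col_noise j))"
    by (simp add: target_def comb_closed_form_def sum_distrib_left divide_inverse mult_ac)
  then show ?thesis by (simp add: Wbar_weighted_orthogonal)
qed

lemma Gmat_quadratic_form_eq_sum_squares:
  "(\<Sum>l\<in>UNIV. cnj (x$l) * (Gmat *v x)$l)
     = (\<Sum>i\<in>UNIV. complex_of_real (\<beta> i * (cmod (\<Sum>j\<in>UNIV. Wbar i j * x$j))\<^sup>2))
       + (\<Sum>l\<in>UNIV. complex_of_real (col_noise l * (cmod (x$l))\<^sup>2))"
proof -
  define s where "s i = (\<Sum>j\<in>UNIV. Wbar i j * x$j)" for i
  have "(Gmat *v x)$l = (\<Sum>i\<in>UNIV. complex_of_real (\<beta> i) * cnj (Wbar i l) * s i)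
                        + complex_of_real (col_noise l) * x$l" for l
    unfolding Gmat_mult_vec s_def by simp
  then have "(\<Sum>l\<in>UNIV. cnj (x$l) * (Gmat *v x)$l)
     = (\<Sum>l\<in>UNIV. \<Sum>i\<in>UNIV. complex_of_real (\<beta> i) * (cnj (Wbar i l * x$l) * s i))
       + (\<Sum>l\<in>UNIV. complex_of_real (col_noise l) * (cnj (x$l) * x$l))"
    by (simp add: distrib_left sum.distrib sum_distrib_left mult_ac)
  also have "(\<Sum>l\<in>UNIV. \<Sum>i\<in>UNIV. complex_of_real (\<beta> i) * (cnj (Wbar i l * x$l) * s i))
           = (\<Sum>i\<in>UNIV. complex_of_real (\<beta> i) * (cnj (s i) * s i))"
  proof -
    have "cnj (s i) = (\<Sum>l\<in>UNIV. cnj (Wbar i l * x$l))" for i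
      by (simp add: s_def cnj_sum)
    then have "(\<Sum>i\<in>UNIV. complex_of_real (\<beta> i) * (cnj (s i) * s i))
             = (\<Sum>i\<in>UNIV. \<Sum>l\<in>UNIV. complex_of_real (\<beta> i) * (cnj (Wbar i l * x$l) * s i))"
      by (simp only: sum_distrib_left sum_distrib_right)
    then show ?thesis
      by (simp only: sum.swap[of _ "UNIV :: 'k set"])
  qed
  finally have "(\<Sum>l\<in>UNIV. cnj (x$l) * (Gmat *v x)$l)
      = (\<Sum>i\<in>UNIV. complex_of_real (\<beta> i) * (cnj (s i) * s i))
        + (\<Sum>l\<in>UNIV. complex_of_real (col_noise l) * (cnj (x$l) * x$l))" .
  moreover have "cnj z * z = complex_of_real ((cmod z)\<^sup>2)" for z
    by (simp only: complex_norm_square mult.commute)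
  ultimately show ?thesis
    by (simp only: s_def of_real_mult)
qed

lemma Gmat_kernel_trivial:
  assumes "Gmat *v x = 0"
  shows "x = 0"
proof -
  let ?a = "\<lambda>i. \<beta> i * (cmod (\<Sum>j\<in>UNIV. Wbar i j * x$j))\<^sup>2"
  let ?b = "\<lambda>l. col_noise l * (cmod (x$l))\<^sup>2"
  have "complex_of_real ((\<Sum>i\<in>UNIV. ?a i) + (\<Sum>l\<in>UNIV. ?b l)) = 0"
    using Gmat_quadratic_form_eq_sum_squares[of x] assms by simp
  then have sum0: "(\<Sum>i\<in>UNIV. ?a i) + (\<Sum>l\<in>UNIV. ?b l) = 0"
    by (simp only: of_real_eq_0_iff)
  have a: "0 \<le> ?a i" for i using beta[of i] by simp
  have b: "0 \<le> ?b l" for l using col_noise_pos[of l] by simp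
  have "0 \<le> (\<Sum>i\<in>UNIV. ?a i)" "0 \<le> (\<Sum>l\<in>UNIV. ?b l)"
    using a b by (simp_all add: sum_nonneg)
  then have "(\<Sum>l\<in>UNIV. ?b l) = 0"
    using sum0 by linarith
  then have "?b l = 0" for l
    using b by (simp add: sum_nonneg_eq_0_iff)
  moreover have "col_noise l \<noteq> 0" for l
    using col_noise_pos[of l] by simp
  ultimately have "x$l = 0" for l
    by simp
  then show ?thesis
    by (simp add: vec_eq_iff)
qed

lemma invertible_Gmat: "invertible Gmat"
  unfolding invertible_left_inverse matrix_left_invertible_ker using Gmat_kernel_trivial by blast

lemma Pmat_integrand_mean:
  "has_bochner_integral \<Omega>
     (\<lambda>w. (ctrans (hadamard W (Efull (E2 w))) ** (\<chi> i j. if i = j then complex_of_real (\<beta> i) else 0)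
           ** hadamard W (Efull (E2 w))) $ l $ j)
     (\<Sum>i\<in>UNIV. complex_of_real (\<beta> i) * cnj (W$i$l) * W$i$j * err_moment i l j)"
proof -
  let ?e = "\<lambda>j w. err_entry i j (realization w)"
  have "has_bochner_integral \<Omega>
          (\<lambda>w. \<Sum>i\<in>UNIV. complex_of_real (\<beta> i) * cnj (W$i$l) * W$i$j
                         * (err_entry i l (realization w) * err_entry i j (realization w)))
          (\<Sum>i\<in>UNIV. complex_of_real (\<beta> i) * cnj (W$i$l) * W$i$j * err_moment i l j)"
    by (intro has_bochner_integral_sum has_bochner_integral_mult_right err_entry_product_mean)
  then show ?thesis
  proof (rule has_bochner_integral_cong[THEN iffD1, rotated -1])
    fix w assume w: "w \<in> space \<Omega>"
    show "(\<Sum>i\<in>UNIV. complex_of_real (\<beta> i) * cnj (W$i$l) * W$i$j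
                     * (err_entry i l (realization w) * err_entry i j (realization w)))
          = (ctrans (hadamard W (Efull (E2 w))) ** (\<chi> i j. if i = j then complex_of_real (\<beta> i) else 0)
              ** hadamard W (Efull (E2 w))) $ l $ j"
      unfolding ctrans_diag_mult_entry hadamard_def vec_lambda_beta Efull_eq_err_entry
        complex_cnj_mult cnj_err_entry[OF w]
      by (simp only: ac_simps)
  qed auto
qed

lemma Pmat_plus_noise_eq_Gmat: "Pmat \<Omega> S X \<beta> E2 + mat (complex_of_real N0) = Gmat"
  unfolding vec_eq_iff
proof (intro allI)
  fix l j
  have "Pmat \<Omega> S X \<beta> E2 $ l $ j = (\<Sum>i\<in>UNIV. complex_of_real (\<beta> i) * cnj (W$i$l) * W$i$j * err_moment i l j)"
    unfolding Pmat_def mexp_def using Pmat_integrand_mean[of l j] by (simp add: has_bochner_integral_integral_eq)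
  then show "(Pmat \<Omega> S X \<beta> E2 + mat (complex_of_real N0)) $ l $ j = Gmat $ l $ j"
    by (simp add: Gmat_def mat_def)
qed

lemma vexp_error_row: "vexp \<Omega> (\<lambda>w. row k (Efull (E2 w))) $ j = err_mean k j"
  unfolding vexp_def row_def using err_entry_mean[of k j]
  by (simp add: Efull_eq_err_entry has_bochner_integral_integral_eq)

lemma comb_eq_closed_form: "comb = comb_closed_form"
proof -
  have "comb = matrix_inv Gmat *v target"
    unfolding comb_def Ccomb_def Pmat_plus_noise_eq_Gmat
    by (simp add: vexp_error_row) (simp add: target_def Wbar_def row_def)
  also have "\<dots> = matrix_inv Gmat *v (Gmat *v comb_closed_form)"
    by (simp add: Gmat_comb_closed_form)
  also have "\<dots> = comb_closed_form"
    by (simp add: matrix_vector_mul_assoc matrix_inv_left[OF invertible_Gmat])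
  finally show ?thesis .
qed

lemma Gmat_quadratic_form_eq_moments:
  "(\<Sum>i\<in>UNIV. complex_of_real (\<beta> i) * (\<Sum>j\<in>UNIV. \<Sum>l\<in>UNIV. W$i$j * x$j * cnj (W$i$l * x$l) * err_moment i j l))
     + (\<Sum>j\<in>UNIV. complex_of_real N0 * (x$j * cnj (x$j)))
   = (\<Sum>l\<in>UNIV. cnj (x$l) * (Gmat *v x)$l)"
proof -
  let ?f = "\<lambda>i j l. complex_of_real (\<beta> i) * (W$i$j * x$j * cnj (W$i$l * x$l) * err_moment i j l)"
  have Gx: "(Gmat *v x)$l = (\<Sum>j\<in>UNIV. (\<Sum>i\<in>UNIV. complex_of_real (\<beta> i) * cnj (W$i$l) * W$i$j * err_moment i l j) * x$j)
                        + complex_of_real N0 * x$l" for l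
    by (simp add: matrix_vector_mult_def Gmat_def distrib_right sum.distrib
        if_distrib[of "\<lambda>c. c * _"] cong: if_cong)
  have err_moment_sym: "err_moment i l j = err_moment i j l" for i j l
    by (simp add: err_moment_def mult.commute)
  have "(\<Sum>l\<in>UNIV. cnj (x$l) * (Gmat *v x)$l)
     = (\<Sum>l\<in>UNIV. \<Sum>j\<in>UNIV. \<Sum>i\<in>UNIV. ?f i j l) + (\<Sum>j\<in>UNIV. complex_of_real N0 * (x$j * cnj (x$j)))"
    by (simp add: Gx distrib_left sum.distrib sum_distrib_left sum_distrib_right
        err_moment_sym[of _ _ l for l] mult_ac)
  also have "(\<Sum>l\<in>UNIV. \<Sum>j\<in>UNIV. \<Sum>i\<in>UNIV. ?f i j l) = (\<Sum>i\<in>UNIV. \<Sum>j\<in>UNIV. \<Sum>l\<in>UNIV. ?f i j l)"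
  proof -
    have "(\<Sum>l\<in>UNIV. \<Sum>j\<in>UNIV. \<Sum>i\<in>UNIV. ?f i j l) = (\<Sum>l\<in>UNIV. \<Sum>i\<in>UNIV. \<Sum>j\<in>UNIV. ?f i j l)"
      by (rule sum.cong[OF refl]) (rule sum.swap)
    also have "\<dots> = (\<Sum>i\<in>UNIV. \<Sum>l\<in>UNIV. \<Sum>j\<in>UNIV. ?f i j l)"
      by (rule sum.swap)
    also have "\<dots> = (\<Sum>i\<in>UNIV. \<Sum>j\<in>UNIV. \<Sum>l\<in>UNIV. ?f i j l)"
      by (rule sum.cong[OF refl]) (rule sum.swap)
    finally show ?thesis .
  qed
  finally show ?thesis
    by (simp add: sum_distrib_left)
qed

lemma antenna_mse_eq: "antenna_mse = complex_of_real (\<beta> k) - (\<Sum>j\<in>UNIV. cnj (target$j) * comb$j)"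
proof -
  have pick_k: "(\<Sum>i\<in>UNIV. f i * of_bool (i = k)) = f k" for f :: "'k \<Rightarrow> complex"
    by simp
  have "antenna_mse =
      ((\<Sum>i\<in>UNIV. complex_of_real (\<beta> i)
                  * (\<Sum>j\<in>UNIV. \<Sum>l\<in>UNIV. W$i$j * comb$j * cnj (W$i$l * comb$l) * err_moment i j l))
       + (\<Sum>j\<in>UNIV. complex_of_real N0 * (comb$j * cnj (comb$j))))
    - (\<Sum>i\<in>UNIV. (complex_of_real (\<beta> i) * (\<Sum>l\<in>UNIV. cnj (W$i$l * comb$l) * err_mean i l)) * of_bool (i = k))
    - (\<Sum>i\<in>UNIV. (complex_of_real (\<beta> i) * (\<Sum>j\<in>UNIV. W$i$j * comb$j * err_mean i j)) * of_bool (i = k))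
    + (\<Sum>i\<in>UNIV. complex_of_real (\<beta> i) * of_bool (i = k))"
    unfolding antenna_mse_def err_coeff_power_def
    by (simp only: algebra_simps sum.distrib sum_subtractf)
  also have "\<dots> = (\<Sum>l\<in>UNIV. cnj (comb$l) * target$l)
      - complex_of_real (\<beta> k) * (\<Sum>l\<in>UNIV. cnj (W$k$l * comb$l) * err_mean k l)
      - complex_of_real (\<beta> k) * (\<Sum>j\<in>UNIV. W$k$j * comb$j * err_mean k j)
      + complex_of_real (\<beta> k)"
    unfolding Gmat_quadratic_form_eq_moments comb_eq_closed_form Gmat_comb_closed_form pick_k ..
  also have "complex_of_real (\<beta> k) * (\<Sum>l\<in>UNIV. cnj (W$k$l * comb$l) * err_mean k l)
             = (\<Sum>l\<in>UNIV. cnj (comb$l) * target$l)"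
    by (simp add: target_def Wbar_def sum_distrib_left mult_ac)
  also have "complex_of_real (\<beta> k) * (\<Sum>j\<in>UNIV. W$k$j * comb$j * err_mean k j)
             = (\<Sum>j\<in>UNIV. cnj (target$j) * comb$j)"
    by (simp add: target_def Wbar_def sum_distrib_left mult_ac)
  finally show ?thesis by simp
qed

lemma Re_antenna_mse: "Re antenna_mse = \<beta> k / (1 + rho * \<beta> k)"
proof -
  have "Re antenna_mse = \<beta> k - \<beta> k * gain * rho"
    unfolding antenna_mse_eq comb_eq_closed_form target_inner_comb_closed_form by simp
  also have "\<dots> = \<beta> k / (1 + rho * \<beta> k)"
    using one_plus_rho_beta_pos by (simp add: gain_def field_simps)
  finally show ?thesis .
qed

lemma mse_eq:
  "integral\<^sup>L \<Omega> (\<lambda>w. (norm (Mrx (H w) S X (E2 w) (Z w) *v Ccomb \<Omega> S X \<beta> N0 E2 k - col k (H w)))\<^sup>2)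
     = real CARD('m) * \<beta> k / (1 + rho * \<beta> k)"
  using has_bochner_integral_mse Re_antenna_mse unfolding comb_def
  by (simp add: has_bochner_integral_integral_eq)

lemma channel_energy_eq: "integral\<^sup>L \<Omega> (\<lambda>w. (norm (col k (H w)))\<^sup>2) = real CARD('m) * \<beta> k"
  using has_bochner_integral_channel_energy by (simp add: has_bochner_integral_integral_eq)

end

theorem proposition2:
  fixes \<Omega> :: "'w measure"
    and H :: "'w \<Rightarrow> complex^'k::finite^'m::finite"
    and E2 :: "'w \<Rightarrow> real^'d::finite^'k"
    and Z :: "'w \<Rightarrow> complex^('t::finite + 'd)^'m"
    and S :: "complex^'t^'k" and X :: "complex^'d^'k"
    and \<beta> BER :: "'k \<Rightarrow> real" and N0 PD PT :: real and k :: 'k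
  assumes ps: "prob_space \<Omega>"
    and N0: "N0 > 0" and PD: "PD > 0" and PT: "PT > 0"
    and beta: "\<And>i. \<beta> i > 0"
    and BER: "\<And>i. 0 \<le> BER i \<and> BER i \<le> 1"
    and Xmod: "\<And>i j. (cmod (X $ i $ j))\<^sup>2 = PD"
    and SS: "S ** ctrans S = mat (complex_of_real (real CARD('t) * PT))"
    and XX: "X ** ctrans X = mat (complex_of_real (real CARD('d) * PD))"
    and indep: "prob_space.indep_vars \<Omega> (\<lambda>_. borel) (rfam H E2 Z) UNIV"
    and Hdist: "\<And>i j. distr \<Omega> borel (\<lambda>w. H w $ i $ j) = cgauss (\<beta> j)"
    and Zdist: "\<And>i j. distr \<Omega> borel (\<lambda>w. Z w $ i $ j) = cgauss N0"
    and Eval: "\<And>w i j. w \<in> space \<Omega> \<Longrightarrow> E2 w $ i $ j = 1 \<or> E2 w $ i $ j = -1"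
    and Eprob: "\<And>i j. measure \<Omega> {w \<in> space \<Omega>. E2 w $ i $ j = -1} = BER i"
  shows "integral\<^sup>L \<Omega> (\<lambda>w. (norm (Mrx (H w) S X (E2 w) (Z w) *v Ccomb \<Omega> S X \<beta> N0 E2 k
                                      - col k (H w)))\<^sup>2)
           = real CARD('m) * \<beta> k / (1 + rhoDA CARD('t) CARD('d) PT PD N0 \<beta> BER k * \<beta> k)
       \<and> 10 * log 10 (integral\<^sup>L \<Omega> (\<lambda>w. (norm (Mrx (H w) S X (E2 w) (Z w) *v Ccomb \<Omega> S X \<beta> N0 E2 k
                                      - col k (H w)))\<^sup>2)
                      / integral\<^sup>L \<Omega> (\<lambda>w. (norm (col k (H w)))\<^sup>2))
         = 10 * log 10 (1 / (1 + rhoDA CARD('t) CARD('d) PT PD N0 \<beta> BER k * \<beta> k))"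
proof -
  interpret data_aided_channel \<Omega> H E2 Z S X \<beta> BER N0 PD PT k
    using assms by (intro data_aided_channel.intro data_aided_channel_axioms.intro)
  have ratio: "real CARD('m) * \<beta> k / (1 + rho * \<beta> k) / (real CARD('m) * \<beta> k) = 1 / (1 + rho * \<beta> k)"
    using beta[of k] by simp
  show ?thesis
    unfolding mse_eq channel_energy_eq ratio unfolding rho_def by (intro conjI refl)
qed
end
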